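(* Let $q$ be a prime power, let $m,n\ge 1$ with $\gcd(n,q^m-1)=1$. Let $l(x)=\sum_{v=0}^{m} b_v x^{q^v}\in\mathbb{F}_q[x]$ be such that $\bar l(x)=\sum_{v=0}^m b_v x^v$ is a primitive polynomial of degree $m$ over $\mathbb{F}_q$ with $\bar l(x)\neq x-1$, and let $f(x)$ be an irreducible polynomial of degree $n$ over $\mathbb{F}_q$. Setting $b_u=0$ for $u>m$, define for $0\le i\le n-1$ $$c_i=\sum_{u=0}^{\lfloor (m+1)/n\rfloor} b_{i+nu}.$$ Suppose there is an index $i\in\{0,\ldots,n-1\}$ with $c_i\neq 0$ and $c_j=0$ for all $j\in\{0,\dots,n-1\}$, $j\ne i$. Then the polynomial $$F(x)=\frac{f\big(c_i^{-1}l(x)\big)}{f(x)}$$ of degree $n(q^m-1)$ is irreducible over $\mathbb{F}_q$.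
   Context: A primitive polynomial of degree $m$ over $\mathbb{F}_q$ is a monic irreducible polynomial of degree $m$ whose roots generate the multiplicative group $\mathbb{F}_{q^m}^*$. *)

theory Defs
  imports "HOL-Computational_Algebra.Computational_Algebra" "HOL-Library.Cardinality"
begin

text \<open>Primitive polynomial of degree m over the finite field 'a (with q = CARD('a)):
  a monic irreducible polynomial of degree m whose root generates the multiplicative
  group of F_{q^m}. The field F_{q^m} = F_q(alpha) is realised as the residue ring
  F_q[x]/(p), in which the class of x is a root of p; "generates the multiplicative
  group" means the class of x has multiplicative order q^m - 1 there.\<close>
definition primitive_poly :: "nat \<Rightarrow> 'a::{finite,field} poly \<Rightarrow> bool" where
  "primitive_poly m (p :: 'a poly) \<longleftrightarrow>
     lead_coeff p = 1 \<and> degree p = m \<and> irreducible p \<and>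
     [:0, 1:] ^ (CARD('a) ^ m - 1) mod p = 1 \<and>
     (\<forall>k. 0 < k \<and> k < CARD('a) ^ m - 1 \<longrightarrow> [:0, 1:] ^ k mod p \<noteq> 1)"

definition linearized :: "'a::{finite,field} poly \<Rightarrow> 'a poly" where
  "linearized (lb :: 'a poly) = (\<Sum>v\<le>degree lb. monom (coeff lb v) (CARD('a) ^ v))"

end

theory Submission
  imports Defs "HOL-Algebra.Algebraic_Closure_Type"
begin

text \<open>
  Let \<open>c = c\<^sub>i\<close> and \<open>g = c\<inverse> l\<close>. We work in the algebraic closure of \<open>\<bbbF>\<^sub>q\<close>, where
  \<open>x \<mapsto> x ^ q\<close> is additive. On \<open>GF(q ^ n)\<close>, which contains all roots of \<open>f\<close>, the Frobenius map
  has order dividing \<open>n\<close>, so there \<open>l(x) = c x ^ q ^ i\<close> and \<open>g\<close> maps roots of \<open>f\<close> to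
  roots of \<open>f\<close>; hence \<open>f\<close> divides \<open>f(g(x))\<close>.

  Let \<open>r\<close> be a root of a nonconstant factor of \<open>F = f(g(x)) / f(x)\<close>. Then \<open>\<gamma> = g(r)\<close> is a
  root of \<open>f\<close>, and so is \<open>\<gamma>\<^sub>0 = \<gamma> ^ q ^ (n - i)\<close>, with \<open>g(\<gamma>\<^sub>0) = \<gamma>\<close>. Thus \<open>v = r - \<gamma>\<^sub>0\<close> is
  a root of \<open>l\<close>, and \<open>v \<noteq> 0\<close> because \<open>f\<close> cannot divide \<open>F\<close>: \<open>f(g(x))\<close> divides
  \<open>g(x) ^ q ^ n - g(x)\<close>, whose derivative is a nonzero constant. If \<open>r ^ q ^ k = r\<close>, then
  \<open>\<gamma>\<^sub>0\<close> is fixed as well, whence \<open>n\<close> divides \<open>k\<close>; and so is \<open>v\<close>, whence the irreducible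
  polynomial \<open>lbar\<close>, which annihilates \<open>v\<close> in the \<open>\<bbbF>\<^sub>q[X]\<close>-module where \<open>X\<close> acts as the
  Frobenius map, divides \<open>X ^ k - 1\<close>, and primitivity gives \<open>q ^ m - 1 dvd k\<close>. By coprimality
  \<open>r\<close> has at least \<open>n (q ^ m - 1) = degree F\<close> distinct conjugates, so every nonconstant factor
  of \<open>F\<close> has degree \<open>degree F\<close>.
\<close>

hide_const (open) Divisibility.irreducible Polynomials.degree up_ring.monom up_ring.coeff module.smult
  Polynomials.lead_coeff

section \<open>Finite fields\<close>

lemma CARD_ge_2: "2 \<le> CARD('a::{finite,field})"
proof -
  have "card {0::'a, 1} \<le> CARD('a)"
    by (intro card_mono) auto
  thus ?thesis by simp
qed

lemma one_less_CARD_power: "0 < m \<Longrightarrow> 1 < CARD('a::{finite,field}) ^ m"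
  using CARD_ge_2[where 'a='a] by (intro one_less_power) auto

lemma power_card_eq_self_if_mult_closed:
  fixes S :: "'b::field set"
  assumes fin: "finite S" and "0 \<in> S" and mult: "\<And>u w. u \<in> S \<Longrightarrow> w \<in> S \<Longrightarrow> u * w \<in> S"
    and "z \<in> S"
  shows "z ^ card S = z"
proof -
  define S0 where "S0 = S - {0}"
  have fin0: "finite S0" using fin by (simp add: S0_def)
  have card_S: "card S = Suc (card S0)"
    using card.remove[OF fin \<open>0 \<in> S\<close>] by (simp add: S0_def)
  show ?thesis
  proof (cases "z = 0")
    case False
    have "(\<lambda>s. z * s) ` S0 = S0"
      using False mult \<open>z \<in> S\<close> by (intro endo_inj_surj[OF fin0]) (auto simp: S0_def intro: inj_onI)
    hence "\<Prod>S0 = (\<Prod>s\<in>(\<lambda>s. z * s) ` S0. s)"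
      by simp
    also have "\<dots> = (\<Prod>s\<in>S0. z * s)"
      using False by (subst prod.reindex) (auto intro: inj_onI)
    also have "\<dots> = z ^ card S0 * \<Prod>S0"
      by (simp add: prod.distrib)
    finally have "z ^ card S0 = 1"
      using fin0 by (simp add: S0_def)
    thus ?thesis
      using card_S by simp
  qed (simp add: card_S)
qed

lemma power_CARD_eq_self: "(c::'a::{finite,field}) ^ CARD('a) = c"
  by (rule power_card_eq_self_if_mult_closed) auto

lemma power_CARD_power_eq_self: "(c::'a::{finite,field}) ^ (CARD('a) ^ t) = c"
  by (induction t) (simp_all add: power_mult power_CARD_eq_self)

text \<open>The polynomial \<open>\<Sum>0<k<q. (q choose k) X\<^sup>k\<close> vanishes on all \<open>q\<close> elements of the field
  although its degree is less than \<open>q\<close>.\<close>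
lemma CARD_choose_eq_0:
  assumes "0 < k" "k < CARD('a::{finite,field})"
  shows "of_nat (CARD('a) choose k) = (0::'a)"
proof -
  define q where "q = CARD('a)"
  define p where "p = (\<Sum>j\<in>{1..<q}. monom (of_nat (q choose j) :: 'a) j)"
  have q2: "2 \<le> q" using CARD_ge_2 q_def by simp
  have roots: "poly p y = 0" for y :: 'a
  proof -
    have "(y + 1) ^ q = (\<Sum>j\<le>q. of_nat (q choose j) * y ^ j * 1 ^ (q - j))"
      by (rule binomial_ring)
    also have "{..q} = insert 0 (insert q {1..<q})"
      using q2 by auto
    also have "(\<Sum>j\<in>insert 0 (insert q {1..<q}). of_nat (q choose j) * y ^ j * 1 ^ (q - j))
        = 1 + (y ^ q + poly p y)"
      using q2 by (simp add: p_def poly_sum poly_monom)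
    finally show ?thesis
      using power_CARD_eq_self[of y] power_CARD_eq_self[of "y + 1"] by (simp add: q_def)
  qed
  have deg: "degree p \<le> q - 1"
    unfolding p_def by (rule degree_sum_le) (auto intro: order.trans[OF degree_monom_le])
  have "p = 0"
  proof (rule ccontr)
    assume "p \<noteq> 0"
    hence "card {y. poly p y = 0} \<le> degree p" by (rule card_poly_roots_bound)
    thus False using roots deg q_def q2 by simp
  qed
  hence "coeff p k = 0" by simp
  thus ?thesis
    using assms by (simp add: p_def q_def coeff_sum coeff_monom)
qed

lemma of_nat_CARD_eq_0: "of_nat CARD('a::{finite,field}) = (0::'a)"
  using CARD_choose_eq_0[of 1, where 'a='a] CARD_ge_2[where 'a='a] by simp

section \<open>Polynomials over a field\<close>

lemma degree_pos_if_irreducible: "irreducible (f :: 'a::field poly) \<Longrightarrow> 0 < degree f"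
  using is_unit_iff_degree[of f] irreducible_not_unit[of f] by fastforce

text \<open>A member of least degree divides every member of the ideal and is not a unit.\<close>
lemma irreducible_dvd_if_ideal:
  fixes f g :: "'a::field poly"
  assumes irr: "irreducible f" and "P f" and "P g"
    and mult: "\<And>a h. P h \<Longrightarrow> P (a * h)"
    and diff: "\<And>h k. P h \<Longrightarrow> P k \<Longrightarrow> P (h - k)"
    and no_const: "\<And>c. c \<noteq> 0 \<Longrightarrow> \<not> P [:c:]"
  shows "f dvd g"
proof -
  have "P f \<and> f \<noteq> 0" using irr \<open>P f\<close> by auto
  then obtain d where d: "P d" "d \<noteq> 0" and least: "\<And>h. P h \<Longrightarrow> h \<noteq> 0 \<Longrightarrow> degree d \<le> degree h"
    using ex_has_least_nat[of "\<lambda>h. P h \<and> h \<noteq> 0" f degree] by blast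
  have d_dvd: "d dvd h" if "P h" for h
  proof (rule ccontr)
    assume "\<not> d dvd h"
    hence "h mod d \<noteq> 0" by (simp add: mod_eq_0_iff_dvd)
    moreover have "P (h mod d)"
      using diff[OF \<open>P h\<close> mult[OF \<open>P d\<close>, of "h div d"]] by (simp add: minus_div_mult_eq_mod)
    ultimately have "degree d \<le> degree (h mod d)" by (rule least[rotated])
    thus False using degree_mod_less'[OF \<open>d \<noteq> 0\<close> \<open>h mod d \<noteq> 0\<close>] by simp
  qed
  have "\<not> is_unit d"
    using d no_const by (auto simp: is_unit_poly_iff)
  moreover obtain k where "f = d * k"
    using d_dvd[OF \<open>P f\<close>] by blast
  ultimately have "is_unit k"
    using Factorial_Ring.irreducibleD[OF irr] by blast
  hence "f dvd d"
    using \<open>f = d * k\<close> by (simp add: mult_unit_dvd_iff')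
  thus ?thesis
    using d_dvd[OF \<open>P g\<close>] by (rule dvd_trans)
qed

lemma dvd_pderiv_if_square_dvd:
  fixes p h :: "'a::field poly"
  assumes "p * p dvd h"
  shows "p dvd pderiv h"
proof -
  obtain r where "h = p * p * r"
    using assms by blast
  hence "pderiv h = p * (pderiv (p * r) + r * pderiv p)"
    by (simp add: pderiv_mult algebra_simps)
  thus ?thesis by simp
qed

lemma irreducible_if_divisors_degree_ge:
  fixes F :: "'a::field poly"
  assumes "0 < degree F" and large: "\<And>a. a dvd F \<Longrightarrow> 0 < degree a \<Longrightarrow> degree F \<le> degree a"
  shows "irreducible F"
proof (rule Factorial_Ring.irreducibleI)
  show "F \<noteq> 0"
    using assms(1) by auto
  thus "\<not> is_unit F"
    using assms(1) by (simp add: is_unit_iff_degree)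
  fix a b assume F: "F = a * b"
  hence "a \<noteq> 0" "b \<noteq> 0"
    using \<open>F \<noteq> 0\<close> by auto
  show "is_unit a \<or> is_unit b"
  proof (rule disjCI)
    assume "\<not> is_unit b"
    hence "degree F \<le> degree b"
      using large[of b] F \<open>b \<noteq> 0\<close> by (simp add: is_unit_iff_degree)
    hence "degree a = 0"
      using F \<open>a \<noteq> 0\<close> \<open>b \<noteq> 0\<close> by (simp add: degree_mult_eq)
    thus "is_unit a"
      using \<open>a \<noteq> 0\<close> by (simp add: is_unit_iff_degree)
  qed
qed

lemma pderiv_sum: "pderiv (\<Sum>x\<in>A. f x) = (\<Sum>x\<in>A. pderiv (f x))"
  by (induction A rule: infinite_finite_induct) (simp_all add: pderiv_add)

section \<open>The Frobenius map on the algebraic closure\<close>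

lemma add_power_CARD_alg_closure:
  "(u + w :: 'a::{finite,field} alg_closure) ^ CARD('a) = u ^ CARD('a) + w ^ CARD('a)"
proof -
  define q where "q = CARD('a)"
  have q2: "2 \<le> q" using CARD_ge_2 q_def by simp
  have "(u + w) ^ q = (\<Sum>k\<le>q. of_nat (q choose k) * u ^ k * w ^ (q - k))"
    by (rule binomial_ring)
  also have "{..q} = insert 0 (insert q {1..<q})"
    using q2 by auto
  also have "(\<Sum>k\<in>insert 0 (insert q {1..<q}). of_nat (q choose k) * u ^ k * w ^ (q - k))
      = w ^ q + (u ^ q + (\<Sum>k\<in>{1..<q}. of_nat (q choose k) * u ^ k * w ^ (q - k)))"
    using q2 by simp
  also have "(\<Sum>k\<in>{1..<q}. of_nat (q choose k) * u ^ k * w ^ (q - k)) = 0"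
  proof (intro sum.neutral ballI)
    fix k assume "k \<in> {1..<q}"
    hence "to_ac (of_nat (q choose k) :: 'a) = 0"
      using CARD_choose_eq_0[of k, where 'a='a] q_def by auto
    thus "of_nat (q choose k) * u ^ k * w ^ (q - k) = 0" by simp
  qed
  finally show ?thesis using q_def by (simp add: add.commute)
qed

lemma add_power_CARD_power_alg_closure:
  "(u + w :: 'a::{finite,field} alg_closure) ^ (CARD('a) ^ t) = u ^ (CARD('a) ^ t) + w ^ (CARD('a) ^ t)"
proof (induction t arbitrary: u w)
  case (Suc t)
  have "(u + w) ^ (CARD('a) ^ Suc t) = ((u + w) ^ CARD('a)) ^ (CARD('a) ^ t)"
    by (simp add: power_mult)
  also have "\<dots> = (u ^ CARD('a)) ^ (CARD('a) ^ t) + (w ^ CARD('a)) ^ (CARD('a) ^ t)"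
    by (simp only: add_power_CARD_alg_closure Suc.IH)
  finally show ?case
    by (simp add: power_mult)
qed simp

lemma diff_power_CARD_power_alg_closure:
  "(u - w :: 'a::{finite,field} alg_closure) ^ (CARD('a) ^ t) = u ^ (CARD('a) ^ t) - w ^ (CARD('a) ^ t)"
  using add_power_CARD_power_alg_closure[of "u - w" w t] by simp

lemma sum_power_CARD_alg_closure:
  "(\<Sum>x\<in>A. f x :: 'a::{finite,field} alg_closure) ^ CARD('a) = (\<Sum>x\<in>A. f x ^ CARD('a))"
  by (induction A rule: infinite_finite_induct) (simp_all add: add_power_CARD_alg_closure)

lemma power_CARD_power_alg_closure_inject:
  assumes "(u :: 'a::{finite,field} alg_closure) ^ (CARD('a) ^ t) = w ^ (CARD('a) ^ t)"
  shows "u = w"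
proof -
  have "(u - w) ^ (CARD('a) ^ t) = 0"
    using assms by (simp only: diff_power_CARD_power_alg_closure diff_self)
  thus ?thesis by simp
qed

lemma to_ac_power_CARD_power: "to_ac (c::'a::{finite,field}) ^ (CARD('a) ^ t) = to_ac c"
  by (simp only: to_ac_power[symmetric] power_CARD_power_eq_self)

section \<open>Evaluation in the algebraic closure\<close>

definition eval_ac :: "'a::field poly \<Rightarrow> 'a alg_closure \<Rightarrow> 'a alg_closure" where
  "eval_ac p z = poly (map_poly to_ac p) z"

lemma map_poly_to_ac_add: "map_poly to_ac (p + r) = map_poly to_ac p + map_poly to_ac r"
  by (rule poly_eqI) (simp add: coeff_map_poly)

lemma map_poly_to_ac_diff: "map_poly to_ac (p - r) = map_poly to_ac p - map_poly to_ac r"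
  by (rule poly_eqI) (simp add: coeff_map_poly)

lemma map_poly_to_ac_mult: "map_poly to_ac (p * r) = map_poly to_ac p * map_poly to_ac r"
  by (rule poly_eqI) (simp add: coeff_map_poly coeff_mult to_ac_sum)

lemma eval_ac_0 [simp]: "eval_ac 0 z = 0"
  and eval_ac_1 [simp]: "eval_ac 1 z = 1"
  and eval_ac_pCons [simp]: "eval_ac (pCons a p) z = to_ac a + z * eval_ac p z"
  and eval_ac_add [simp]: "eval_ac (p + r) z = eval_ac p z + eval_ac r z"
  and eval_ac_diff [simp]: "eval_ac (p - r) z = eval_ac p z - eval_ac r z"
  and eval_ac_mult [simp]: "eval_ac (p * r) z = eval_ac p z * eval_ac r z"
  and eval_ac_smult [simp]: "eval_ac (smult c p) z = to_ac c * eval_ac p z"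
  and eval_ac_monom [simp]: "eval_ac (monom c k) z = to_ac c * z ^ k"
  unfolding eval_ac_def
  by (simp_all add: map_poly_pCons map_poly_to_ac_add map_poly_to_ac_diff map_poly_to_ac_mult
      map_poly_smult map_poly_monom poly_monom)

lemma eval_ac_sum: "eval_ac (\<Sum>x\<in>A. f x) z = (\<Sum>x\<in>A. eval_ac (f x) z)"
  by (induction A rule: infinite_finite_induct) simp_all

lemma eval_ac_pcompose [simp]: "eval_ac (pcompose p r) z = eval_ac p (eval_ac r z)"
  by (induction p) (simp_all add: pcompose_pCons)

lemma eval_ac_power_CARD_power:
  "eval_ac (g :: 'a::{finite,field} poly) z ^ (CARD('a) ^ t) = eval_ac g (z ^ (CARD('a) ^ t))"
  by (induction g)
    (simp_all add: add_power_CARD_power_alg_closure to_ac_power_CARD_power power_mult_distrib)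

lemma degree_map_poly_to_ac [simp]: "degree (map_poly to_ac p) = degree p"
  by (rule degree_map_poly) simp

lemma eval_ac_root_exists:
  assumes "degree p > 0"
  shows "\<exists>z. eval_ac p z = 0"
  unfolding eval_ac_def using alg_closed_imp_poly_has_root[of "map_poly to_ac p"] assms by simp

lemma irreducible_dvd_if_common_root:
  fixes f g :: "'a::field poly"
  assumes "irreducible f" and "eval_ac f z = 0" and "eval_ac g z = 0"
  shows "f dvd g"
  using assms(1) by (rule irreducible_dvd_if_ideal[where P = "\<lambda>h. eval_ac h z = 0"]) (use assms in auto)

section \<open>Roots of irreducible polynomials over a finite field\<close>

lemma card_degree_less_Suc:
  "finite {a::'a::{finite,field} poly. degree a < Suc n} \<and>
   card {a::'a poly. degree a < Suc n} = CARD('a) ^ Suc n"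
proof (induction n)
  case 0
  have "{a::'a poly. degree a < Suc 0} = (\<lambda>c. [:c:]) ` UNIV"
    by (auto intro: degree_0_id[symmetric])
  moreover have "inj (\<lambda>c::'a. [:c:])"
    by (auto intro: injI)
  ultimately show ?case
    by (simp add: card_image)
next
  case (Suc n)
  have "{a::'a poly. degree a < Suc (Suc n)} = case_prod pCons ` (UNIV \<times> {p. degree p < Suc n})"
  proof (intro equalityI subsetI)
    fix a :: "'a poly" assume "a \<in> {a. degree a < Suc (Suc n)}"
    thus "a \<in> case_prod pCons ` (UNIV \<times> {p. degree p < Suc n})"
      by (cases a) (auto split: if_splits)
  qed auto
  moreover have "inj_on (case_prod pCons) (UNIV \<times> {p::'a poly. degree p < Suc n})"
    by (auto intro: inj_onI)
  ultimately show ?case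
    using Suc by (simp add: card_image card_cartesian_product)
qed

text \<open>\<open>S\<close> is the field \<open>\<bbbF>\<^sub>q(z)\<close>.\<close>
lemma values_at_root_of_irreducible:
  fixes f :: "'a::{finite,field} poly"
  assumes irr: "irreducible f" and deg: "degree f = n" and root: "eval_ac f z = 0"
  defines "S \<equiv> (\<lambda>a. eval_ac a z) ` {a. degree a < n}"
  shows "finite S" and "card S = CARD('a) ^ n" and "\<And>a. eval_ac a z \<in> S"
proof -
  have "f \<noteq> 0" "n \<noteq> 0"
    using irr deg degree_pos_if_irreducible[OF irr] by auto
  then obtain n' where n': "n = Suc n'"
    using not0_implies_Suc by blast
  note degree_less = card_degree_less_Suc[of n', where 'a='a, folded n']
  show "finite S"
    unfolding S_def using degree_less by simp
  have "inj_on (\<lambda>a. eval_ac a z) {a. degree a < n}"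
  proof (rule inj_onI)
    fix a b :: "'a poly"
    assume "a \<in> {a. degree a < n}" "b \<in> {a. degree a < n}" "eval_ac a z = eval_ac b z"
    moreover from this have "f dvd a - b"
      by (intro irreducible_dvd_if_common_root[OF irr root]) simp
    ultimately show "a = b"
      using deg by (metis dvd_imp_degree_le degree_diff_less eq_iff_diff_eq_0 mem_Collect_eq not_less)
  qed
  thus "card S = CARD('a) ^ n"
    unfolding S_def using degree_less by (simp add: card_image)
  fix a :: "'a poly"
  have "degree (a mod f) < n"
    using degree_mod_less[OF \<open>f \<noteq> 0\<close>, of a] deg \<open>n \<noteq> 0\<close> by auto
  moreover have "eval_ac a z = eval_ac (a mod f) z"
    using root by (metis add_0 div_mult_mod_eq eval_ac_add eval_ac_mult mult_zero_right)
  ultimately show "eval_ac a z \<in> S"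
    unfolding S_def by blast
qed

lemma power_CARD_power_degree_root:
  fixes f :: "'a::{finite,field} poly"
  assumes "irreducible f" and "degree f = n" and "eval_ac f z = 0"
  shows "z ^ (CARD('a) ^ n) = z"
proof -
  note S = values_at_root_of_irreducible[OF assms]
  have "z ^ card ((\<lambda>a. eval_ac a z) ` {a. degree a < n}) = z"
  proof (rule power_card_eq_self_if_mult_closed[OF S(1)])
    show "0 \<in> (\<lambda>a. eval_ac a z) ` {a. degree a < n}"
      using S(3)[of 0] by simp
    show "z \<in> (\<lambda>a. eval_ac a z) ` {a. degree a < n}"
      using S(3)[of "[:0, 1:]"] by simp
    show "u * w \<in> (\<lambda>a. eval_ac a z) ` {a. degree a < n}"
      if u: "u \<in> (\<lambda>a. eval_ac a z) ` {a. degree a < n}"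
        and w: "w \<in> (\<lambda>a. eval_ac a z) ` {a. degree a < n}" for u w
    proof -
      obtain a b where "u = eval_ac a z" "w = eval_ac b z"
        using u w by blast
      thus ?thesis
        using S(3)[of "a * b"] by simp
    qed
  qed
  thus ?thesis
    using S(2) by simp
qed

lemma power_power_eq_self_gcd:
  fixes z :: "'b::monoid_mult" and b :: nat
  assumes "z ^ (b ^ k) = z" and "z ^ (b ^ n) = z" and "k \<noteq> 0"
  shows "z ^ (b ^ gcd k n) = z"
proof -
  have periodic: "z ^ (b ^ (a * t)) = z" if "z ^ (b ^ a) = z" for a t
    using that by (induction t) (simp_all add: power_add power_mult)
  obtain x y where "k * x = n * y + gcd k n"
    using bezout_nat[OF \<open>k \<noteq> 0\<close>, of n] by blast
  hence "z = (z ^ (b ^ (n * y))) ^ (b ^ gcd k n)"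
    using periodic[OF assms(1), of x] by (simp add: power_add power_mult)
  thus ?thesis
    using periodic[OF assms(2), of y] by simp
qed

text \<open>With \<open>e = gcd k n\<close>, all \<open>q ^ n\<close> elements of \<open>\<bbbF>\<^sub>q(z)\<close> are roots of \<open>X ^ q ^ e - X\<close>,
  so \<open>n \<le> e\<close>.\<close>
lemma degree_dvd_if_power_CARD_power_eq_self:
  fixes f :: "'a::{finite,field} poly"
  assumes irr: "irreducible f" and deg: "degree f = n" and root: "eval_ac f z = 0"
    and fixed: "z ^ (CARD('a) ^ k) = z" and "k \<noteq> 0"
  shows "n dvd k"
proof -
  define q where "q = CARD('a)"
  define e where "e = gcd k n"
  define S where "S = (\<lambda>a. eval_ac a z) ` {a. degree a < n}"
  note S = values_at_root_of_irreducible[OF irr deg root, folded S_def q_def]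
  define Q where "Q = monom (1::'a alg_closure) (q ^ e) - [:0, 1:]"
  have "e \<noteq> 0"
    using \<open>k \<noteq> 0\<close> by (simp add: e_def)
  have "1 < q"
    using CARD_ge_2[where 'a='a] by (simp add: q_def)
  hence "q \<le> q ^ e"
    using \<open>e \<noteq> 0\<close> by (simp add: self_le_power)
  hence "degree Q = q ^ e"
    using \<open>1 < q\<close> unfolding Q_def diff_conv_add_uminus
    by (subst degree_add_eq_left) (simp_all add: degree_monom_eq)
  hence "Q \<noteq> 0"
    using \<open>1 < q\<close> \<open>q \<le> q ^ e\<close> by auto
  have ze: "z ^ (q ^ e) = z"
    using power_CARD_power_degree_root[OF irr deg root] fixed \<open>k \<noteq> 0\<close>
    by (simp add: power_power_eq_self_gcd e_def q_def)
  have "S \<subseteq> {w. poly Q w = 0}"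
  proof
    fix s assume "s \<in> S"
    then obtain a where "s = eval_ac a z"
      by (auto simp: S_def)
    hence "s ^ (q ^ e) = s"
      using eval_ac_power_CARD_power[of a z e] ze by (simp add: q_def)
    thus "s \<in> {w. poly Q w = 0}"
      by (simp add: Q_def poly_monom)
  qed
  hence "q ^ n \<le> card {w. poly Q w = 0}"
    using S(2) by (metis card_mono poly_roots_finite[OF \<open>Q \<noteq> 0\<close>])
  also have "\<dots> \<le> q ^ e"
    using card_poly_roots_bound[OF \<open>Q \<noteq> 0\<close>] \<open>degree Q = q ^ e\<close> by simp
  finally have "n \<le> e"
    using \<open>1 < q\<close> by simp
  moreover have "e dvd n" "e dvd k"
    by (simp_all add: e_def)
  moreover have "n \<noteq> 0"
    using degree_pos_if_irreducible[OF irr] deg by simp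
  ultimately show ?thesis
    using dvd_imp_le le_antisym by (metis neq0_conv)
qed

lemma irreducible_dvd_X_power_CARD_power_minus_X:
  fixes f :: "'a::{finite,field} poly"
  assumes "irreducible f" and "degree f = n"
  shows "f dvd monom 1 (CARD('a) ^ n) - [:0, 1:]"
proof -
  obtain z where "eval_ac f z = 0"
    using eval_ac_root_exists[of f] degree_pos_if_irreducible[OF \<open>irreducible f\<close>] by blast
  moreover from this have "eval_ac (monom 1 (CARD('a) ^ n) - [:0, 1:]) z = 0"
    using power_CARD_power_degree_root[OF assms] by simp
  ultimately show ?thesis
    by (rule irreducible_dvd_if_common_root[OF \<open>irreducible f\<close>])
qed

text \<open>The conjugates \<open>r ^ q ^ j\<close>, \<open>j < N\<close>, are \<open>N\<close> distinct roots of \<open>p\<close>.\<close>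
lemma degree_ge_if_power_CARD_power_ne_self:
  fixes p :: "'a::{finite,field} poly"
  assumes "p \<noteq> 0" and root: "eval_ac p r = 0"
    and not_fixed: "\<And>k. 0 < k \<Longrightarrow> k < N \<Longrightarrow> r ^ (CARD('a) ^ k) \<noteq> r"
  shows "N \<le> degree p"
proof -
  have "map_poly to_ac p \<noteq> 0"
    using \<open>p \<noteq> 0\<close> by (simp add: map_poly_eq_0_iff)
  have "inj_on (\<lambda>j. r ^ (CARD('a) ^ j)) {..<N}"
  proof (rule linorder_inj_onI')
    fix a b assume "a \<in> {..<N}" "b \<in> {..<N}" "a < b"
    show "r ^ (CARD('a) ^ a) \<noteq> r ^ (CARD('a) ^ b)"
    proof
      assume "r ^ (CARD('a) ^ a) = r ^ (CARD('a) ^ b)"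
      also have "\<dots> = (r ^ (CARD('a) ^ (b - a))) ^ (CARD('a) ^ a)"
        using \<open>a < b\<close> by (simp flip: power_mult power_add add: mult.commute)
      finally have "r ^ (CARD('a) ^ (b - a)) = r"
        by (metis power_CARD_power_alg_closure_inject)
      thus False
        using not_fixed[of "b - a"] \<open>a < b\<close> \<open>b \<in> {..<N}\<close> by (simp add: less_imp_diff_less)
    qed
  qed
  moreover have "(\<lambda>j. r ^ (CARD('a) ^ j)) ` {..<N} \<subseteq> {w. poly (map_poly to_ac p) w = 0}"
    using root eval_ac_power_CARD_power[of p r] by (auto simp: eval_ac_def power_0_left)
  ultimately have "N \<le> card {w. poly (map_poly to_ac p) w = 0}"
    by (metis card_image card_lessThan card_mono poly_roots_finite[OF \<open>map_poly to_ac p \<noteq> 0\<close>])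
  also have "\<dots> \<le> degree p"
    using card_poly_roots_bound[OF \<open>map_poly to_ac p \<noteq> 0\<close>] by simp
  finally show ?thesis .
qed

section \<open>Linearized polynomials\<close>

text \<open>\<open>lin_eval g\<close> is the map \<open>v \<mapsto> l(v)\<close> of the linearized \<open>q\<close>-associate \<open>l\<close> of \<open>g\<close>
  (see \<open>eval_ac_linearized\<close>), i.e. the action of \<open>g\<close> on the algebraic closure viewed as an
  \<open>\<bbbF>\<^sub>q[X]\<close>-module with \<open>X\<close> acting as \<open>x \<mapsto> x ^ q\<close>.\<close>
definition lin_eval :: "'a::{finite,field} poly \<Rightarrow> 'a alg_closure \<Rightarrow> 'a alg_closure" where
  "lin_eval g v = (\<Sum>j\<le>degree g. to_ac (coeff g j) * v ^ (CARD('a) ^ j))"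

lemma lin_eval_upto:
  "degree g \<le> N \<Longrightarrow> lin_eval g v = (\<Sum>j\<le>N. to_ac (coeff g j) * v ^ (CARD('a) ^ j))"
  for g :: "'a::{finite,field} poly"
  unfolding lin_eval_def by (rule sum.mono_neutral_left) (auto simp: coeff_eq_0)

lemma eval_ac_linearized [simp]: "eval_ac (linearized g) v = lin_eval g v"
  by (simp add: linearized_def lin_eval_def eval_ac_sum)

lemma lin_eval_0 [simp]: "lin_eval 0 v = 0"
  and lin_eval_const [simp]: "lin_eval [:c:] v = to_ac c * v"
  by (simp_all add: lin_eval_def)

lemma lin_eval_add: "lin_eval (g + h) v = lin_eval g v + lin_eval h v"
proof -
  define N where "N = max (degree g) (degree h)"
  have "lin_eval (g + h) v = (\<Sum>j\<le>N. to_ac (coeff (g + h) j) * v ^ (CARD('a) ^ j))"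
    unfolding N_def by (rule lin_eval_upto) (rule degree_add_le_max)
  also have "\<dots> = lin_eval g v + lin_eval h v"
    by (simp add: lin_eval_upto[of g N] lin_eval_upto[of h N] N_def sum.distrib algebra_simps)
  finally show ?thesis .
qed

lemma lin_eval_smult: "lin_eval (smult c g) v = to_ac c * lin_eval g v"
  by (simp add: lin_eval_upto[of "smult c g" "degree g"] lin_eval_def sum_distrib_left mult.assoc)

lemma lin_eval_diff: "lin_eval (g - h) v = lin_eval g v - lin_eval h v"
proof -
  have "g - h = g + smult (-1) h" by simp
  thus ?thesis by (simp only: lin_eval_add lin_eval_smult) simp
qed

lemma lin_eval_pCons_0: "lin_eval (pCons 0 g) v = lin_eval g v ^ CARD('a)"
  for g :: "'a::{finite,field} poly"
proof -
  have frobenius: "(to_ac c * x ^ (CARD('a) ^ j)) ^ CARD('a) = to_ac c * x ^ (CARD('a) ^ Suc j)"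
    for c :: 'a and x j
    by (simp add: power_mult_distrib power_CARD_eq_self mult.commute flip: to_ac_power power_mult)
  have "lin_eval (pCons 0 g) v = (\<Sum>j\<le>Suc (degree g). to_ac (coeff (pCons 0 g) j) * v ^ (CARD('a) ^ j))"
    by (rule lin_eval_upto) (simp add: degree_pCons_le)
  also have "\<dots> = (\<Sum>j\<le>degree g. (to_ac (coeff g j) * v ^ (CARD('a) ^ j)) ^ CARD('a))"
    by (subst sum.atMost_Suc_shift) (simp add: frobenius)
  also have "\<dots> = lin_eval g v ^ CARD('a)"
    by (simp add: lin_eval_def sum_power_CARD_alg_closure)
  finally show ?thesis .
qed

lemma lin_eval_mult_eq_0: "lin_eval g v = 0 \<Longrightarrow> lin_eval (h * g) v = 0"
  for g h :: "'a::{finite,field} poly"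
  by (induction h) (simp_all add: lin_eval_add lin_eval_smult lin_eval_pCons_0 zero_power)

lemma lin_eval_monom_1: "lin_eval (monom 1 k) v = v ^ (CARD('a) ^ k)"
  for v :: "'a::{finite,field} alg_closure"
proof -
  have "lin_eval (monom 1 k) v = (\<Sum>j\<le>k. to_ac (coeff (monom 1 k) j) * v ^ (CARD('a) ^ j))"
    by (rule lin_eval_upto) (rule degree_monom_le)
  also have "\<dots> = (\<Sum>j\<le>k. if j = k then v ^ (CARD('a) ^ k) else 0)"
    by (intro sum.cong refl) (simp add: coeff_monom)
  finally show ?thesis by simp
qed

lemma lin_eval_diff_point: "lin_eval g (a - b) = lin_eval g a - lin_eval g b"
  by (simp add: lin_eval_def diff_power_CARD_power_alg_closure sum_subtractf algebra_simps)

text \<open>The annihilator of \<open>v\<close> in this module is an ideal of \<open>\<bbbF>\<^sub>q[X]\<close> containing \<open>X ^ k - 1\<close>.\<close>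
lemma dvd_monom_minus_1_if_lin_eval_eq_0:
  fixes g :: "'a::{finite,field} poly"
  assumes "irreducible g" and "v \<noteq> 0" and "lin_eval g v = 0"
    and "v ^ (CARD('a) ^ k) = v"
  shows "g dvd monom 1 k - 1"
  using assms(1,3)
proof (rule irreducible_dvd_if_ideal[where P = "\<lambda>h. lin_eval h v = 0"])
  show "lin_eval (monom 1 k - 1) v = 0"
    using assms(4) by (simp add: lin_eval_diff lin_eval_monom_1 one_pCons)
qed (use \<open>v \<noteq> 0\<close> in \<open>simp_all add: lin_eval_mult_eq_0 lin_eval_diff\<close>)

lemma sum_lessThan_mult_Suc_eq_sum_mod:
  fixes g :: "nat \<Rightarrow> 'b::comm_monoid_add"
  shows "(\<Sum>w<n * Suc M. g w) = (\<Sum>j<n. \<Sum>u\<le>M. g (j + n * u))"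
proof -
  have "(\<Sum>j<n. \<Sum>u\<le>M. g (j + n * u)) = (\<Sum>(j, u)\<in>{..<n} \<times> {..M}. g (j + n * u))"
    by (rule sum.cartesian_product)
  also have "\<dots> = (\<Sum>w<n * Suc M. g w)"
  proof (rule sum.reindex_bij_witness[of _ "\<lambda>w. (w mod n, w div n)" "\<lambda>(j, u). j + n * u"])
    fix w assume w: "w \<in> {..<n * Suc M}"
    hence "0 < n" by (cases n) auto
    moreover have "w div n < Suc M"
      using w \<open>0 < n\<close> by (simp add: div_less_iff_less_mult mult.commute)
    ultimately show "(w mod n, w div n) \<in> {..<n} \<times> {..M}"
      by simp
  next
    fix ju assume "ju \<in> {..<n} \<times> {..M}"
    then obtain j u where "ju = (j, u)" "j < n" "u \<le> M" by auto
    moreover have "j + n * u < n * Suc M"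
      using \<open>j < n\<close> \<open>u \<le> M\<close> by (metis add_less_le_mono mult_Suc_right mult_le_mono2 add.commute)
    ultimately show "(\<lambda>(j, u). j + n * u) ju \<in> {..<n * Suc M}" by simp
  qed auto
  finally show ?thesis ..
qed

text \<open>On \<open>GF(q ^ n)\<close> the Frobenius map has order dividing \<open>n\<close>, so the coefficients of \<open>g\<close>
  can be collected by the residue of their index modulo \<open>n\<close>; \<open>M\<close> is any bound with
  \<open>degree g < n (M + 1)\<close>.\<close>
lemma lin_eval_eq_sum_mod:
  fixes g :: "'a::{finite,field} poly"
  assumes fixed: "z ^ (CARD('a) ^ n) = z" and deg: "degree g < n * Suc M"
  shows "lin_eval g z = (\<Sum>j<n. to_ac (\<Sum>u\<le>M. coeff g (j + n * u)) * z ^ (CARD('a) ^ j))"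
proof -
  have "n \<noteq> 0" using deg by (cases n) auto
  have mod_exp: "z ^ (CARD('a) ^ w) = z ^ (CARD('a) ^ (w mod n))" for w
  proof -
    have "z ^ (CARD('a) ^ (n * t)) = z" for t
      using fixed by (induction t) (simp_all add: power_add power_mult)
    thus ?thesis
      by (metis div_mult_mod_eq mult.commute power_add power_mult)
  qed
  have "lin_eval g z = (\<Sum>w<n * Suc M. to_ac (coeff g w) * z ^ (CARD('a) ^ w))"
    using deg \<open>n \<noteq> 0\<close> lin_eval_upto[of g "n * Suc M - 1" z]
    by (simp add: lessThan_Suc_atMost[symmetric])
  also have "\<dots> = (\<Sum>w<n * Suc M. to_ac (coeff g w) * z ^ (CARD('a) ^ (w mod n)))"
    by (intro sum.cong refl arg_cong2[where f = "(*)"] mod_exp)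
  also have "\<dots> = (\<Sum>j<n. \<Sum>u\<le>M. to_ac (coeff g (j + n * u)) * z ^ (CARD('a) ^ ((j + n * u) mod n)))"
    by (rule sum_lessThan_mult_Suc_eq_sum_mod)
  also have "\<dots> = (\<Sum>j<n. \<Sum>u\<le>M. to_ac (coeff g (j + n * u)) * z ^ (CARD('a) ^ j))"
    by (intro sum.cong refl) simp
  also have "\<dots> = (\<Sum>j<n. to_ac (\<Sum>u\<le>M. coeff g (j + n * u)) * z ^ (CARD('a) ^ j))"
    by (simp add: to_ac_sum sum_distrib_right)
  finally show ?thesis .
qed

lemma coeff_linearized:
  "coeff (linearized g) k = (\<Sum>v\<le>degree g. if CARD('a) ^ v = k then coeff g v else 0)"
  for g :: "'a::{finite,field} poly"
  by (simp add: linearized_def coeff_sum coeff_monom)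

lemma degree_linearized:
  fixes g :: "'a::{finite,field} poly"
  assumes "g \<noteq> 0"
  shows "degree (linearized g) = CARD('a) ^ degree g"
proof (rule antisym)
  have q: "1 < CARD('a)" using CARD_ge_2[where 'a='a] by simp
  show "degree (linearized g) \<le> CARD('a) ^ degree g"
  proof (rule degree_le, intro allI impI)
    fix k assume "CARD('a) ^ degree g < k"
    moreover have "CARD('a) ^ v \<le> CARD('a) ^ degree g" if "v \<le> degree g" for v
      using that q by simp
    ultimately show "coeff (linearized g) k = 0"
      unfolding coeff_linearized by (intro sum.neutral) force
  qed
  have "coeff (linearized g) (CARD('a) ^ degree g) = (\<Sum>v\<in>{degree g}. coeff g v)"
    unfolding coeff_linearized by (rule sum.mono_neutral_cong_right) (use q in auto)
  thus "CARD('a) ^ degree g \<le> degree (linearized g)"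
    using assms by (intro le_degree) simp
qed

lemma pderiv_linearized: "pderiv (linearized g) = [:coeff g 0:]"
  for g :: "'a::{finite,field} poly"
proof -
  have "pderiv (linearized g) =
      (\<Sum>v\<le>degree g. monom (of_nat (CARD('a) ^ v) * coeff g v) (CARD('a) ^ v - 1))"
    by (simp add: linearized_def pderiv_sum pderiv_monom)
  also have "\<dots> = (\<Sum>v\<in>{0}. monom (of_nat (CARD('a) ^ v) * coeff g v) (CARD('a) ^ v - 1))"
    by (rule sum.mono_neutral_right) (auto simp: of_nat_CARD_eq_0)
  finally show ?thesis by (simp add: monom_0)
qed

section \<open>Primitive polynomials\<close>

lemma primitive_poly_dvd_monom_minus_1_imp_dvd:
  fixes g :: "'a::{finite,field} poly"
  assumes prim: "primitive_poly m g" and "1 \<le> m" and "g dvd monom 1 k - 1"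
  shows "CARD('a) ^ m - 1 dvd k"
proof -
  define x where "x = [:0, 1::'a:]"
  define M where "M = CARD('a) ^ m - 1"
  have "degree g = m" and XM: "x ^ M mod g = 1"
    and least: "\<And>j. 0 < j \<Longrightarrow> j < M \<Longrightarrow> x ^ j mod g \<noteq> 1"
    using prim by (auto simp: primitive_poly_def x_def M_def)
  have "0 < M"
    using one_less_CARD_power[of m, where 'a='a] \<open>1 \<le> m\<close> by (simp add: M_def)
  have one: "1 mod g = 1"
    using \<open>degree g = m\<close> \<open>1 \<le> m\<close> by (intro mod_poly_less) simp
  have "x ^ k mod g = 1 mod g"
    using \<open>g dvd monom 1 k - 1\<close> by (simp only: mod_eq_dvd_iff) (simp add: x_def monom_altdef)
  hence "x ^ k mod g = 1"
    using one by simp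
  moreover have "x ^ k = (x ^ M) ^ (k div M) * x ^ (k mod M)"
    by (simp flip: power_mult power_add)
  ultimately have "x ^ (k mod M) mod g = 1"
    using XM one by (metis mod_mult_left_eq mult_1 power_mod power_one)
  hence "k mod M = 0"
    using least[of "k mod M"] \<open>0 < M\<close> by (meson mod_less_divisor neq0_conv)
  thus ?thesis
    by (simp add: M_def mod_eq_0_iff_dvd)
qed

lemma primitive_poly_coeff_0_ne_0:
  fixes g :: "'a::{finite,field} poly"
  assumes "primitive_poly m g" and "1 \<le> m"
  shows "coeff g 0 \<noteq> 0"
proof
  assume "coeff g 0 = 0"
  hence "[:0, 1:] dvd g"
    using dvd_iff_poly_eq_0[of 0 g] by (simp add: poly_0_coeff_0)
  moreover have "g dvd monom 1 (CARD('a) ^ m - 1) - 1"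
  proof -
    have "degree g = m" "[:0, 1:] ^ (CARD('a) ^ m - 1) mod g = 1"
      using assms(1) by (simp_all add: primitive_poly_def)
    moreover have "1 mod g = 1"
      using \<open>degree g = m\<close> assms(2) by (intro mod_poly_less) simp
    ultimately have "[:0, 1:] ^ (CARD('a) ^ m - 1) mod g = 1 mod g"
      by simp
    thus ?thesis
      by (simp only: mod_eq_dvd_iff) (simp add: monom_altdef)
  qed
  ultimately have "[:0, 1:] dvd monom (1::'a) (CARD('a) ^ m - 1) - 1"
    by (rule dvd_trans)
  moreover have "[:0, 1:] dvd monom (1::'a) (CARD('a) ^ m - 1)"
    using one_less_CARD_power[of m, where 'a='a] assms(2) by (simp add: monom_altdef)
  ultimately have "[:0, 1:] dvd monom (1::'a) (CARD('a) ^ m - 1) - (monom 1 (CARD('a) ^ m - 1) - 1)"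
    by (rule dvd_diff[rotated])
  thus False
    by (simp add: is_unit_iff_degree)
qed

section \<open>Composition with a linearized polynomial\<close>

lemma lin_eval_eq_single_residue:
  fixes g :: "'a::{finite,field} poly"
  assumes "z ^ (CARD('a) ^ n) = z" and "degree g < n * Suc M" and "i < n"
    and "\<forall>j<n. j \<noteq> i \<longrightarrow> (\<Sum>u\<le>M. coeff g (j + n * u)) = 0"
  shows "lin_eval g z = to_ac (\<Sum>u\<le>M. coeff g (i + n * u)) * z ^ (CARD('a) ^ i)"
proof -
  have "lin_eval g z = (\<Sum>j<n. to_ac (\<Sum>u\<le>M. coeff g (j + n * u)) * z ^ (CARD('a) ^ j))"
    using assms(1,2) by (rule lin_eval_eq_sum_mod)
  also have "\<dots> = (\<Sum>j\<in>{i}. to_ac (\<Sum>u\<le>M. coeff g (j + n * u)) * z ^ (CARD('a) ^ j))"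
    using assms(3,4) by (intro sum.mono_neutral_right) auto
  finally show ?thesis by simp
qed

context
  fixes f g :: "'a::{finite,field} poly" and n i :: nat
  assumes irr: "irreducible f" and deg: "degree f = n"
    and frobenius: "\<And>z. z ^ (CARD('a) ^ n) = z \<Longrightarrow> eval_ac g z = z ^ (CARD('a) ^ i)"
begin

lemma dvd_pcompose_if_frobenius: "f dvd pcompose f g"
proof -
  obtain z where root: "eval_ac f z = 0"
    using eval_ac_root_exists degree_pos_if_irreducible[OF irr] by blast
  have "eval_ac (pcompose f g) z = eval_ac f z ^ (CARD('a) ^ i)"
    using frobenius[OF power_CARD_power_degree_root[OF irr deg root]]
    by (simp add: eval_ac_power_CARD_power)
  thus ?thesis
    using root by (intro irreducible_dvd_if_common_root[OF irr root]) (simp add: zero_power)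
qed

lemma frobenius_preimage_root:
  assumes root: "eval_ac f \<gamma> = 0" and "i \<le> n"
  shows "eval_ac f (\<gamma> ^ (CARD('a) ^ (n - i))) = 0"
    and "eval_ac g (\<gamma> ^ (CARD('a) ^ (n - i))) = \<gamma>"
proof -
  have fixed: "\<gamma> ^ (CARD('a) ^ n) = \<gamma>"
    by (rule power_CARD_power_degree_root[OF irr deg root])
  show "eval_ac f (\<gamma> ^ (CARD('a) ^ (n - i))) = 0"
    using root by (simp flip: eval_ac_power_CARD_power add: zero_power)
  have "(\<gamma> ^ (CARD('a) ^ (n - i))) ^ (CARD('a) ^ n) = \<gamma> ^ (CARD('a) ^ (n - i))"
    using fixed by (metis power_mult mult.commute)
  hence "eval_ac g (\<gamma> ^ (CARD('a) ^ (n - i))) = (\<gamma> ^ (CARD('a) ^ (n - i))) ^ (CARD('a) ^ i)"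
    by (rule frobenius)
  also have "\<dots> = \<gamma> ^ (CARD('a) ^ n)"
    using \<open>i \<le> n\<close> by (simp flip: power_mult power_add)
  finally show "eval_ac g (\<gamma> ^ (CARD('a) ^ (n - i))) = \<gamma>"
    using fixed by simp
qed

text \<open>\<open>f \<circ> g\<close> divides \<open>(X ^ q ^ n - X) \<circ> g\<close>, whose derivative is a nonzero constant.\<close>
lemma not_dvd_pcompose_div:
  assumes "pderiv g = [:d:]" and "d \<noteq> 0"
  shows "\<not> f dvd pcompose f g div f"
proof
  assume "f dvd pcompose f g div f"
  hence "f * f dvd pcompose f g div f * f"
    by (rule mult_dvd_mono) simp
  hence "f * f dvd pcompose f g"
    using dvd_pcompose_if_frobenius by simp
  moreover obtain h where "monom 1 (CARD('a) ^ n) - [:0, 1:] = f * h"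
    using irreducible_dvd_X_power_CARD_power_minus_X[OF irr deg] by blast
  hence "pcompose f g dvd pcompose (monom 1 (CARD('a) ^ n) - [:0, 1:]) g"
    by (simp add: pcompose_mult)
  ultimately have "f * f dvd pcompose (monom 1 (CARD('a) ^ n) - [:0, 1:]) g"
    by (rule dvd_trans)
  hence "f dvd pderiv (pcompose (monom 1 (CARD('a) ^ n) - [:0, 1:]) g)"
    by (rule dvd_pderiv_if_square_dvd)
  moreover have "0 < n"
    using degree_pos_if_irreducible[OF irr] deg by simp
  ultimately have "f dvd [:- d:]"
    using assms(1) by (simp add: pderiv_pcompose pderiv_diff pderiv_monom pderiv_pCons
        of_nat_CARD_eq_0 zero_power pcompose_uminus pcompose_const)
  thus False
    using irr \<open>d \<noteq> 0\<close> by (meson dvd_unit_imp_unit irreducible_not_unit is_unit_triv neg_equal_0_iff_equal)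
qed

end

lemma degree_pcompose_linearized_div:
  fixes lb f :: "'a::{finite,field} poly"
  assumes "f dvd pcompose f (smult c (linearized lb))" and "0 < degree f" and "c \<noteq> 0" and "lb \<noteq> 0"
  shows "degree (pcompose f (smult c (linearized lb)) div f) = degree f * (CARD('a) ^ degree lb - 1)"
proof -
  define F where "F = pcompose f (smult c (linearized lb)) div f"
  have "degree (F * f) = degree f * CARD('a) ^ degree lb"
    using assms by (simp add: F_def degree_pcompose degree_linearized)
  moreover from this have "F \<noteq> 0" "f \<noteq> 0"
    using \<open>0 < degree f\<close> by auto
  ultimately have "degree F + degree f = degree f * CARD('a) ^ degree lb"
    by (simp add: degree_mult_eq)
  thus ?thesis
    by (simp add: F_def diff_mult_distrib2)
qed

lemma period_dvd_if_power_CARD_power_fixed: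
  fixes lb f :: "'a::{finite,field} poly"
  assumes prim: "primitive_poly m lb" and "1 \<le> m"
    and irr: "irreducible f" and deg: "degree f = n" and cop: "coprime n (CARD('a) ^ m - 1)"
    and root: "eval_ac f \<gamma> = 0" and "v \<noteq> 0" and lin_root: "lin_eval lb v = 0"
    and "0 < k" and "\<gamma> ^ (CARD('a) ^ k) = \<gamma>" and "v ^ (CARD('a) ^ k) = v"
  shows "n * (CARD('a) ^ m - 1) dvd k"
proof -
  have "n dvd k"
    using degree_dvd_if_power_CARD_power_eq_self[OF irr deg root] assms(9,10) by simp
  moreover have "lb dvd monom 1 k - 1"
    using prim assms(7,8,11) by (intro dvd_monom_minus_1_if_lin_eval_eq_0) (simp_all add: primitive_poly_def)
  hence "CARD('a) ^ m - 1 dvd k"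
    by (rule primitive_poly_dvd_monom_minus_1_imp_dvd[OF prim \<open>1 \<le> m\<close>])
  ultimately show ?thesis
    using cop by (simp add: divides_mult)
qed

lemma degree_ge_if_dvd_pcompose_linearized_div:
  fixes lb f p :: "'a::{finite,field} poly"
  assumes prim: "primitive_poly m lb" and "1 \<le> m"
    and irr: "irreducible f" and deg: "degree f = n" and cop: "coprime n (CARD('a) ^ m - 1)"
    and "i \<le> n" and "c \<noteq> 0"
    and frobenius: "\<And>z. z ^ (CARD('a) ^ n) = z \<Longrightarrow> eval_ac (smult c (linearized lb)) z = z ^ (CARD('a) ^ i)"
    and p_dvd: "p dvd pcompose f (smult c (linearized lb)) div f" and "0 < degree p"
  shows "n * (CARD('a) ^ m - 1) \<le> degree p"
proof -
  define g where "g = smult c (linearized lb)"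
  define F where "F = pcompose f g div f"
  note context_lemmas = dvd_pcompose_if_frobenius[OF irr deg frobenius, folded g_def]
    frobenius_preimage_root[OF irr deg frobenius, folded g_def]
    not_dvd_pcompose_div[OF irr deg frobenius, folded g_def]
  obtain r where root: "eval_ac p r = 0"
    using eval_ac_root_exists[OF \<open>0 < degree p\<close>] by blast
  define \<gamma> where "\<gamma> = eval_ac g r"
  define \<gamma>\<^sub>0 where "\<gamma>\<^sub>0 = \<gamma> ^ (CARD('a) ^ (n - i))"
  define v where "v = r - \<gamma>\<^sub>0"
  have "pcompose f g = F * f"
    using context_lemmas(1) by (simp add: F_def)
  moreover have "eval_ac F r = 0"
    using p_dvd root by (auto simp: F_def g_def elim!: dvdE)
  ultimately have "eval_ac f \<gamma> = 0"
    by (metis \<gamma>_def eval_ac_mult eval_ac_pcompose mult_zero_left)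
  hence root0: "eval_ac f \<gamma>\<^sub>0 = 0" and "eval_ac g \<gamma>\<^sub>0 = \<gamma>"
    using context_lemmas(2,3) \<open>i \<le> n\<close> by (simp_all add: \<gamma>\<^sub>0_def)
  hence "to_ac c * lin_eval lb \<gamma>\<^sub>0 = to_ac c * lin_eval lb r"
    by (simp add: g_def \<gamma>_def)
  hence lin_root: "lin_eval lb v = 0"
    using \<open>c \<noteq> 0\<close> by (simp add: v_def lin_eval_diff_point)
  have "v \<noteq> 0"
  proof
    assume "v = 0"
    hence "f dvd F"
      using irreducible_dvd_if_common_root[OF irr] root0 \<open>eval_ac F r = 0\<close> by (simp add: v_def)
    moreover have "pderiv g = [:c * coeff lb 0:]" "c * coeff lb 0 \<noteq> 0"
      using primitive_poly_coeff_0_ne_0[OF prim \<open>1 \<le> m\<close>] \<open>c \<noteq> 0\<close>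
      by (simp_all add: g_def pderiv_smult pderiv_linearized)
    ultimately show False
      using context_lemmas(4) by (simp add: F_def)
  qed
  have "n * (CARD('a) ^ m - 1) dvd k" if "0 < k" and fixed: "r ^ (CARD('a) ^ k) = r" for k
  proof (rule period_dvd_if_power_CARD_power_fixed[OF prim \<open>1 \<le> m\<close> irr deg cop root0 \<open>v \<noteq> 0\<close> lin_root \<open>0 < k\<close>])
    have "\<gamma> ^ (CARD('a) ^ k) = \<gamma>"
      using fixed by (simp add: \<gamma>_def eval_ac_power_CARD_power)
    thus fixed0: "\<gamma>\<^sub>0 ^ (CARD('a) ^ k) = \<gamma>\<^sub>0"
      by (metis \<gamma>\<^sub>0_def mult.commute power_mult)
    show "v ^ (CARD('a) ^ k) = v"
      using fixed fixed0 by (simp add: v_def diff_power_CARD_power_alg_closure)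
  qed
  hence "r ^ (CARD('a) ^ k) \<noteq> r" if "0 < k" "k < n * (CARD('a) ^ m - 1)" for k
    using that by (meson dvd_imp_le not_le)
  thus ?thesis
    using \<open>0 < degree p\<close> root by (intro degree_ge_if_power_CARD_power_ne_self) auto
qed

theorem mainTheorem8:
  fixes lbar f :: "'a::{finite,field} poly" and m n i :: nat
  assumes "m \<ge> 1" and "n \<ge> 1"
    and "coprime n (CARD('a) ^ m - 1)"
    and "primitive_poly m lbar"
    and "lbar \<noteq> [:-1, 1:]"
    and "irreducible f" and "degree f = n"
    and "i < n"
    and "(\<Sum>u\<le>(m + 1) div n. coeff lbar (i + n * u)) \<noteq> 0"
    and "\<forall>j<n. j \<noteq> i \<longrightarrow> (\<Sum>u\<le>(m + 1) div n. coeff lbar (j + n * u)) = 0"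
  shows "degree (pcompose f (smult (inverse (\<Sum>u\<le>(m + 1) div n. coeff lbar (i + n * u)))
                    (linearized lbar)) div f) = n * (CARD('a) ^ m - 1)
       \<and> irreducible (pcompose f (smult (inverse (\<Sum>u\<le>(m + 1) div n. coeff lbar (i + n * u)))
                    (linearized lbar)) div f)"
proof -
  define c where "c = (\<Sum>u\<le>(m + 1) div n. coeff lbar (i + n * u))"
  define g where "g = smult (inverse c) (linearized lbar)"
  define F where "F = pcompose f g div f"
  have deg_lbar: "degree lbar = m" and "lbar \<noteq> 0"
    using assms(1,4) by (auto simp: primitive_poly_def)
  have "m < n * Suc ((m + 1) div n)"
    unfolding mult_Suc_right using mult_div_mod_eq[of n "m + 1"] mod_less_divisor[of n "m + 1"] assms(2)
    by linarith
  hence frobenius: "eval_ac g z = z ^ (CARD('a) ^ i)" if "z ^ (CARD('a) ^ n) = z" for z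
    using lin_eval_eq_single_residue[OF that _ assms(8,10)] assms(9) deg_lbar by (simp add: g_def c_def)
  have "f dvd pcompose f g"
    by (rule dvd_pcompose_if_frobenius[OF assms(6,7) frobenius])
  hence degree_F: "degree F = n * (CARD('a) ^ m - 1)"
    using degree_pcompose_linearized_div[of f "inverse c" lbar] degree_pos_if_irreducible[OF assms(6)]
      assms(7,9) \<open>lbar \<noteq> 0\<close> deg_lbar by (simp add: F_def g_def c_def)
  moreover have "irreducible F"
  proof (rule irreducible_if_divisors_degree_ge)
    show "0 < degree F"
      using degree_F assms(1,2) one_less_CARD_power[of m, where 'a='a] by simp
    show "degree F \<le> degree p" if "p dvd F" "0 < degree p" for p
      using degree_ge_if_dvd_pcompose_linearized_div[OF assms(4,1,6,7,3) _ _ frobenius[unfolded g_def]]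
        that assms(8,9) degree_F by (simp add: F_def g_def c_def)
  qed
  ultimately show ?thesis
    by (simp add: F_def g_def c_def)
qed

end
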